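(* Let $r>1$ and $a>1$. There is a constant $c=c(r)$ such that for every $f\in\mathcal{F}_r$, every $s\in[1,a]$, and every $x\in\mathbb{C}^n$, $t>0$ with $$B_c(x,t)\subset B_c(x,at)\subset B_c(0,1),$$ one has $$\sup_{B_c(x,st)} f\le c\log s+\sup_{B_c(x,t)} f .$$
   Context: $B_c(x,\rho)$ denotes the Euclidean ball in $\mathbb{C}^n$ with center $x$ and radius $\rho$. For $r>1$, $\mathcal{F}_r$ is the class of plurisubharmonic functions $f:\mathbb{C}^n\to\mathbb{R}$ with $\sup_{B_c(0,r)}f=0$ and $\sup_{B_c(0,1)}f\ge -1$. *)

theory Defs
  imports "HOL-Analysis.Analysis"
begin

definition upper_semicont :: "('a::topological_space \<Rightarrow> real) \<Rightarrow> bool" where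
  "upper_semicont f \<longleftrightarrow> (\<forall>x. \<forall>e>0. eventually (\<lambda>y. f y < f x + e) (at x))"

text \<open>Plurisubharmonic functions f : C^n -> R: upper semicontinuous and satisfying
  the sub-mean value inequality on every complex disc {a + zeta b : |zeta| <= 1},
  i.e. the restriction to every complex line is subharmonic.\<close>
definition psh :: "(complex ^ 'n \<Rightarrow> real) \<Rightarrow> bool" where
  "psh f \<longleftrightarrow> upper_semicont f \<and>
     (\<forall>a b. (\<lambda>\<theta>. f (a + exp (\<i> * of_real \<theta>) *s b)) integrable_on {0..2*pi} \<and>
            f a \<le> (1 / (2*pi)) * integral {0..2*pi} (\<lambda>\<theta>. f (a + exp (\<i> * of_real \<theta>) *s b)))"

text \<open>The class F_r; B_c(x,rho) is the open Euclidean ball, ball x rho.\<close>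
definition F_class :: "real \<Rightarrow> (complex ^ 'n \<Rightarrow> real) set" where
  "F_class r = {f. psh f \<and> Sup (f ` ball 0 r) = 0 \<and> Sup (f ` ball 0 1) \<ge> -1}"

end

theory Submission
  imports Defs "HOL-Complex_Analysis.Complex_Analysis"
begin

(* Restricted to a complex line, a plurisubharmonic function is subharmonic, so on spheres
   around x it satisfies Hadamard's three circles inequality: f is bounded by the interpolation,
   linear in log |y - x|, of its bounds on two concentric spheres.  As f <= 0 on B(0,r), applying
   this between the radii t and R = 1 - |x| + (r-1)/2 gives
     sup_{B(x,st)} f <= (1 - log s / log (R/t)) sup_{B(x,t)} f,
   so it remains to bound -sup_{B(x,t)} f by a multiple of log (R/t).  This follows from the same
   inequality once f >= -K at some point within (r-1)/4 of x.  Such a point is produced by a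
   Harnack-type chain of boundedly many steps, starting from a point of B(0,1) where f >= -2 and
   losing a factor 4 in the lower bound at each step. *)

section \<open>Circle means\<close>

lemma holomorphic_unit_circle_mean:
  fixes g :: "complex \<Rightarrow> complex"
  assumes holo: "g holomorphic_on ball 0 R" and "1 < R"
  shows "((\<lambda>t. g (cis t)) has_integral (2 * pi * g 0)) {0..2*pi}"
proof -
  have "cball 0 1 \<subseteq> ball (0::complex) R" using \<open>1 < R\<close> by auto
  then have "continuous_on (cball 0 1) g" "g holomorphic_on ball 0 1"
    using holomorphic_on_subset[OF holo] ball_subset_cball
    by (blast intro: holomorphic_on_imp_continuous_on)+
  then have "((\<lambda>u. g u / (u - 0)) has_contour_integral (2 * of_real pi * \<i> * g 0)) (circlepath 0 1)"
    by (intro Cauchy_integral_circlepath) simp_all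
  then have "((\<lambda>t. g (cis t) / cis t * \<i> * cis t) has_integral (2 * pi * \<i> * g 0)) {0..2*pi}"
    unfolding circlepath_def by (subst (asm) has_contour_integral_part_circlepath_iff) auto
  then have "((\<lambda>t. (-\<i>) * (\<i> * g (cis t))) has_integral (-\<i>) * (2 * pi * \<i> * g 0)) {0..2*pi}"
    by (intro has_integral_mult_right) (simp add: cis_neq_zero mult.commute)
  then show ?thesis
    by (simp add: algebra_simps)
qed

lemma ln_norm_circle_mean:
  fixes a b :: complex
  assumes "a \<noteq> 0" "cmod b < cmod a"
  shows "((\<lambda>\<theta>. ln (cmod (a + exp (\<i> * of_real \<theta>) * b))) has_integral (2 * pi * ln (cmod a))) {0..2*pi}"
proof -
  define q where "q = b / a"
  define R where "R = 2 / (1 + cmod q)"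
  have "cmod q < 1" using assms by (simp add: q_def norm_divide divide_less_eq)
  then have "1 < R" "cmod q * R < 1"
    by (simp_all add: R_def field_simps add_pos_nonneg)
  have Re_pos: "0 < Re (1 + q * u)" if "cmod u < R" for u
  proof -
    have "cmod (q * u) \<le> cmod q * R"
      using that by (simp add: norm_mult mult_left_mono)
    then show ?thesis
      using \<open>cmod q * R < 1\<close> abs_Re_le_cmod[of "q * u"] by simp
  qed
  then have "1 + q * u \<notin> \<real>\<^sub>\<le>\<^sub>0" if "cmod u < R" for u
    using that by (force simp: complex_nonpos_Reals_iff)
  then have "(\<lambda>u. Ln (1 + q * u)) holomorphic_on ball 0 R"
    by (intro holomorphic_intros) auto
  from has_integral_linear[OF holomorphic_unit_circle_mean[OF this \<open>1 < R\<close>] bounded_linear_Re]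
  have "((\<lambda>t. Re (Ln (1 + q * cis t))) has_integral 0) {0..2*pi}"
    by (simp add: o_def)
  then have "((\<lambda>t. ln (cmod a) + Re (Ln (1 + q * cis t))) has_integral (2 * pi * ln (cmod a) + 0)) {0..2*pi}"
    by (intro has_integral_add) (use has_integral_const_real[of "ln (cmod a)" 0 "2*pi"] in simp_all)
  moreover have "ln (cmod (a + exp (\<i> * of_real t) * b)) = ln (cmod a) + Re (Ln (1 + q * cis t))" for t
  proof -
    have "a + exp (\<i> * of_real t) * b = a * (1 + q * cis t)"
      using \<open>a \<noteq> 0\<close> by (simp add: q_def cis_conv_exp field_simps)
    moreover have "0 < Re (1 + q * cis t)"
      using Re_pos[of "cis t"] \<open>1 < R\<close> by (metis norm_cis)
    then have "1 + q * cis t \<noteq> 0"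
      by (metis less_irrefl zero_complex.sel(1))
    ultimately show ?thesis
      using \<open>a \<noteq> 0\<close> by (simp add: norm_mult ln_mult)
  qed
  ultimately show ?thesis by simp
qed

lemma norm_sq_circle_mean:
  fixes a b :: complex
  shows "((\<lambda>\<theta>. (cmod (a + exp (\<i> * of_real \<theta>) * b))\<^sup>2) has_integral (2 * pi * ((cmod a)\<^sup>2 + (cmod b)\<^sup>2))) {0..2*pi}"
proof -
  have "(\<lambda>u. cnj a * b * u) holomorphic_on ball 0 2"
    by (intro holomorphic_intros)
  from has_integral_linear[OF holomorphic_unit_circle_mean[OF this] bounded_linear_Re]
  have "((\<lambda>t. Re (cnj a * b * cis t)) has_integral 0) {0..2*pi}"
    by (simp add: o_def)
  then have "((\<lambda>t. ((cmod a)\<^sup>2 + (cmod b)\<^sup>2) + 2 * Re (cnj a * b * cis t))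
               has_integral (2 * pi * ((cmod a)\<^sup>2 + (cmod b)\<^sup>2) + 2 * 0)) {0..2*pi}"
    by (intro has_integral_add has_integral_mult_right)
      (use has_integral_const_real[of "(cmod a)\<^sup>2 + (cmod b)\<^sup>2" 0 "2*pi"] in simp_all)
  moreover have "(cmod (a + exp (\<i> * of_real t) * b))\<^sup>2 = ((cmod a)\<^sup>2 + (cmod b)\<^sup>2) + 2 * Re (cnj a * b * cis t)" for t
  proof -
    have sin_sq: "sin t * sin t = 1 - cos t * cos t"
      using sin_squared_eq[of t] by (simp add: power2_eq_square)
    have "(cmod (a + cis t * b))\<^sup>2 = (Re (a + cis t * b))\<^sup>2 + (Im (a + cis t * b))\<^sup>2"
      by (rule cmod_power2)
    also have "\<dots> = ((cmod a)\<^sup>2 + (cmod b)\<^sup>2) + 2 * Re (cnj a * b * cis t)"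
      using cmod_power2[of a] cmod_power2[of b] by (simp add: sin_sq power2_eq_square algebra_simps)
    finally show ?thesis by (simp add: cis_conv_exp)
  qed
  ultimately show ?thesis by simp
qed

definition usc_at :: "('a::topological_space \<Rightarrow> real) \<Rightarrow> 'a \<Rightarrow> bool" where
  "usc_at v z \<longleftrightarrow> (\<forall>e>0. eventually (\<lambda>w. v w < v z + e) (at z))"

lemma upper_semicont_iff_usc_at: "upper_semicont f \<longleftrightarrow> (\<forall>z. usc_at f z)"
  unfolding upper_semicont_def usc_at_def by blast

lemma usc_at_add_continuous:
  assumes "usc_at u z" "continuous (at z) g"
  shows "usc_at (\<lambda>w. u w + g w) z"
  unfolding usc_at_def
proof (intro allI impI)
  fix e :: real assume "e > 0"
  have "eventually (\<lambda>w. u w < u z + e/2) (at z)"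
    using assms(1) \<open>e > 0\<close> unfolding usc_at_def by simp
  moreover have "eventually (\<lambda>w. dist (g w) (g z) < e/2) (at z)"
    using assms(2) \<open>e > 0\<close> unfolding continuous_at tendsto_iff by (meson half_gt_zero)
  ultimately show "eventually (\<lambda>w. u w + g w < u z + g z + e) (at z)"
  proof eventually_elim
    case (elim w)
    then have "g w - g z < e/2"
      unfolding dist_real_def by arith
    with elim show ?case by linarith
  qed
qed

lemma usc_at_compose:
  assumes "usc_at f (g z)" "continuous (at z) g"
  shows "usc_at (\<lambda>w. f (g w)) z"
  unfolding usc_at_def
proof (intro allI impI)
  fix e :: real assume "e > 0"
  then have "eventually (\<lambda>y. y \<noteq> g z \<longrightarrow> f y < f (g z) + e) (nhds (g z))"
    using assms(1) unfolding usc_at_def eventually_at_filter by simp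
  then have ev: "eventually (\<lambda>y. f y < f (g z) + e) (nhds (g z))"
    by (rule eventually_mono) (use \<open>e > 0\<close> in auto)
  have lim: "filterlim g (nhds (g z)) (at z)"
    using assms(2) by (simp add: continuous_at)
  show "eventually (\<lambda>w. f (g w) < f (g z) + e) (at z)"
    using filterlim_iff[THEN iffD1, OF lim, rule_format, OF ev] by simp
qed

lemma usc_attains_max:
  fixes v :: "'a::topological_space \<Rightarrow> real"
  assumes "compact K" "K \<noteq> {}" and usc: "\<And>z. z \<in> K \<Longrightarrow> usc_at v z"
  shows "\<exists>z\<in>K. \<forall>w\<in>K. v w \<le> v z"
proof (rule ccontr)
  assume "\<not> ?thesis"
  then obtain next_pt where next_pt: "\<And>z. z \<in> K \<Longrightarrow> next_pt z \<in> K \<and> v z < v (next_pt z)"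
    by (metis not_le)
  have "\<exists>T. open T \<and> z \<in> T \<and> (\<forall>w\<in>T. v w < v (next_pt z))" if "z \<in> K" for z
  proof -
    have "eventually (\<lambda>w. v w < v z + (v (next_pt z) - v z)) (at z)"
      using usc[OF that] next_pt[OF that] unfolding usc_at_def by (meson diff_gt_0_iff_gt)
    then have "eventually (\<lambda>w. v w < v (next_pt z)) (at z)"
      by simp
    then obtain T where "open T" "z \<in> T" "\<And>w. w \<in> T \<Longrightarrow> w \<noteq> z \<Longrightarrow> v w < v (next_pt z)"
      unfolding eventually_at_topological by auto
    then show ?thesis
      using next_pt[OF that] by (intro exI[of _ T]) auto
  qed
  then obtain T where T: "\<And>z. z \<in> K \<Longrightarrow> open (T z) \<and> z \<in> T z \<and> (\<forall>w\<in>T z. v w < v (next_pt z))"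
    by metis
  have "K \<subseteq> (\<Union>z\<in>K. T z)"
    using T by blast
  with compactE_image[OF \<open>compact K\<close> _ this] T
  obtain C where C: "C \<subseteq> K" "finite C" "K \<subseteq> (\<Union>z\<in>C. T z)"
    by blast
  then have "C \<noteq> {}" using \<open>K \<noteq> {}\<close> by blast
  define m where "m = Max ((\<lambda>z. v (next_pt z)) ` C)"
  have "m \<in> (\<lambda>z. v (next_pt z)) ` C"
    unfolding m_def using C(2) \<open>C \<noteq> {}\<close> by (intro Max_in) auto
  then obtain z1 where z1: "z1 \<in> C" "v (next_pt z1) = m"
    by auto
  then have "next_pt z1 \<in> K"
    using next_pt C(1) by blast
  then obtain z2 where z2: "z2 \<in> C" "next_pt z1 \<in> T z2"
    using C(3) by blast
  then have "m < v (next_pt z2)"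
    using T[of z2] C(1) z1(2) by blast
  moreover have "v (next_pt z2) \<le> m"
    unfolding m_def using C(2) z2(1) by (intro Max_ge) auto
  ultimately show False by simp
qed

lemma upper_semicont_bdd_above:
  fixes f :: "'a::heine_borel \<Rightarrow> real"
  assumes "upper_semicont f" "bounded S"
  shows "bdd_above (f ` S)"
proof (cases "S = {}")
  case False
  then obtain z where "\<forall>w\<in>closure S. f w \<le> f z"
    using usc_attains_max[of "closure S" f] assms
    by (auto simp: compact_closure upper_semicont_iff_usc_at)
  then show ?thesis
    using closure_subset by (intro bdd_aboveI[of _ "f z"]) blast
qed simp

section \<open>Subharmonic functions of one complex variable\<close>

definition subharmonic :: "(complex \<Rightarrow> real) \<Rightarrow> bool" where
  "subharmonic u \<longleftrightarrow> upper_semicont u \<and>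
     (\<forall>a b. (\<lambda>\<theta>. u (a + exp (\<i> * of_real \<theta>) * b)) integrable_on {0..2*pi} \<and>
        u a \<le> 1 / (2*pi) * integral {0..2*pi} (\<lambda>\<theta>. u (a + exp (\<i> * of_real \<theta>) * b)))"

(* ln |z| has circle mean ln |z0| and |z|^2 has circle mean |z0|^2 + delta^2, so adding
   epsilon |z|^2 makes the sub-mean value inequality strict by epsilon delta^2. *)
lemma subharmonic_perturbed_strict_submean:
  fixes u :: "complex \<Rightarrow> real" and \<alpha> \<epsilon> :: real
  assumes "subharmonic u" "0 < \<delta>" "\<delta> < cmod z0"
  defines "w \<equiv> \<lambda>z. u z - \<alpha> * ln (cmod z) + \<epsilon> * (cmod z)\<^sup>2"
  assumes bound: "\<And>\<theta>. w (z0 + exp (\<i> * of_real \<theta>) * of_real \<delta>) \<le> M"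
  shows "w z0 + \<epsilon> * \<delta>\<^sup>2 \<le> M"
proof -
  let ?pt = "\<lambda>\<theta>. z0 + exp (\<i> * of_real \<theta>) * of_real \<delta>"
  define J where "J = integral {0..2*pi} (\<lambda>\<theta>. u (?pt \<theta>))"
  define Jw where "Jw = J - \<alpha> * (2*pi * ln (cmod z0)) + \<epsilon> * (2*pi * ((cmod z0)\<^sup>2 + \<delta>\<^sup>2))"
  have u_int: "((\<lambda>\<theta>. u (?pt \<theta>)) has_integral J) {0..2*pi}" and u_mean: "2*pi * u z0 \<le> J"
    using \<open>subharmonic u\<close> unfolding subharmonic_def J_def by (auto simp: field_simps)
  have "((\<lambda>\<theta>. ln (cmod (?pt \<theta>))) has_integral (2*pi * ln (cmod z0))) {0..2*pi}"
    using assms(2,3) by (intro ln_norm_circle_mean) auto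
  moreover have "((\<lambda>\<theta>. (cmod (?pt \<theta>))\<^sup>2) has_integral (2*pi * ((cmod z0)\<^sup>2 + \<delta>\<^sup>2))) {0..2*pi}"
    using norm_sq_circle_mean[of z0 "of_real \<delta>"] assms(2) by simp
  ultimately have "((\<lambda>\<theta>. w (?pt \<theta>)) has_integral Jw) {0..2*pi}"
    unfolding w_def Jw_def by (intro has_integral_add has_integral_diff has_integral_mult_right u_int)
  moreover have "((\<lambda>\<theta>. M) has_integral (2*pi * M)) {0..2*pi}"
    using has_integral_const_real[of M 0 "2*pi"] by simp
  ultimately have "Jw \<le> 2*pi * M"
    using bound by (rule has_integral_le)
  moreover have "2*pi * (w z0 + \<epsilon> * \<delta>\<^sup>2) \<le> Jw"
    using u_mean unfolding w_def Jw_def by (simp add: algebra_simps)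
  ultimately have "2*pi * (w z0 + \<epsilon> * \<delta>\<^sup>2) \<le> 2*pi * M"
    by linarith
  then show ?thesis by simp
qed

lemma perturbed_subharmonic_no_interior_max:
  fixes u :: "complex \<Rightarrow> real" and \<alpha> \<epsilon> :: real
  assumes "subharmonic u" "0 < \<epsilon>" "0 < \<rho>1" "\<rho>1 < cmod z0" "cmod z0 < \<rho>2"
  defines "w \<equiv> \<lambda>z. u z - \<alpha> * ln (cmod z) + \<epsilon> * (cmod z)\<^sup>2"
  shows "\<exists>z. \<rho>1 \<le> cmod z \<and> cmod z \<le> \<rho>2 \<and> w z0 < w z"
proof (rule ccontr)
  assume "\<not> ?thesis"
  then have max: "\<And>z. \<rho>1 \<le> cmod z \<Longrightarrow> cmod z \<le> \<rho>2 \<Longrightarrow> w z \<le> w z0"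
    by (auto simp: not_less)
  define \<delta> where "\<delta> = min (cmod z0 - \<rho>1) (\<rho>2 - cmod z0)"
  have "0 < \<delta>" "\<delta> < cmod z0"
    using assms(3-5) by (auto simp: \<delta>_def)
  moreover have "w (z0 + exp (\<i> * of_real \<theta>) * of_real \<delta>) \<le> w z0" for \<theta>
  proof (rule max)
    have "cmod (exp (\<i> * of_real \<theta>) * of_real \<delta>) = \<delta>"
      using \<open>0 < \<delta>\<close> by (simp add: norm_mult)
    then show "\<rho>1 \<le> cmod (z0 + exp (\<i> * of_real \<theta>) * of_real \<delta>)"
      and "cmod (z0 + exp (\<i> * of_real \<theta>) * of_real \<delta>) \<le> \<rho>2"
      using norm_triangle_ineq[of z0 "exp (\<i> * of_real \<theta>) * of_real \<delta>"]
        norm_triangle_ineq2[of z0 "- (exp (\<i> * of_real \<theta>) * of_real \<delta>)"]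
      unfolding \<delta>_def by auto
  qed
  ultimately have "w z0 + \<epsilon> * \<delta>\<^sup>2 \<le> w z0"
    using subharmonic_perturbed_strict_submean[OF \<open>subharmonic u\<close>] unfolding w_def by blast
  moreover have "0 < \<epsilon> * \<delta>\<^sup>2"
    using \<open>0 < \<epsilon>\<close> \<open>0 < \<delta>\<close> by simp
  ultimately show False
    by linarith
qed

lemma perturbed_subharmonic_max_on_boundary:
  fixes u :: "complex \<Rightarrow> real" and \<alpha> \<epsilon> :: real
  assumes "subharmonic u" "0 < \<rho>1" "\<rho>1 < \<rho>2" "0 < \<epsilon>"
  defines "w \<equiv> \<lambda>z. u z - \<alpha> * ln (cmod z) + \<epsilon> * (cmod z)\<^sup>2"
  shows "\<exists>z0. (cmod z0 = \<rho>1 \<or> cmod z0 = \<rho>2) \<and> (\<forall>z. \<rho>1 \<le> cmod z \<and> cmod z \<le> \<rho>2 \<longrightarrow> w z \<le> w z0)"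
proof -
  define K where "K = cball (0::complex) \<rho>2 - ball 0 \<rho>1"
  have K_iff: "z \<in> K \<longleftrightarrow> \<rho>1 \<le> cmod z \<and> cmod z \<le> \<rho>2" for z
    by (auto simp: K_def)
  have "compact K"
    unfolding K_def by (intro compact_diff) auto
  moreover have "K \<noteq> {}"
    using K_iff[of "of_real \<rho>1"] assms(2,3) by auto
  moreover have "usc_at w z" if "z \<in> K" for z
  proof -
    have "z \<noteq> 0" using that \<open>0 < \<rho>1\<close> by (auto simp: K_iff)
    then have "continuous (at z) (\<lambda>z. - \<alpha> * ln (cmod z) + \<epsilon> * (cmod z)\<^sup>2)"
      by (intro continuous_intros) auto
    moreover have "usc_at u z"
      using \<open>subharmonic u\<close> by (simp add: subharmonic_def upper_semicont_iff_usc_at)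
    moreover have "w = (\<lambda>z. u z + (- \<alpha> * ln (cmod z) + \<epsilon> * (cmod z)\<^sup>2))"
      by (simp add: w_def fun_eq_iff)
    ultimately show ?thesis
      using usc_at_add_continuous by simp
  qed
  ultimately have "\<exists>z0\<in>K. \<forall>z\<in>K. w z \<le> w z0"
    by (rule usc_attains_max)
  then obtain z0 where "z0 \<in> K" and max: "\<And>z. z \<in> K \<Longrightarrow> w z \<le> w z0"
    by blast
  moreover have "\<not> (\<rho>1 < cmod z0 \<and> cmod z0 < \<rho>2)"
  proof
    assume "\<rho>1 < cmod z0 \<and> cmod z0 < \<rho>2"
    then obtain z where "z \<in> K" "w z0 < w z"
      using perturbed_subharmonic_no_interior_max[OF assms(1,4,2), of z0 \<rho>2 \<alpha>]
      unfolding w_def K_iff by blast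
    then show False
      using max by (meson not_le)
  qed
  ultimately show ?thesis
    unfolding K_iff by (intro exI[of _ z0]) auto
qed

lemma subharmonic_three_circles:
  fixes u :: "complex \<Rightarrow> real"
  assumes "subharmonic u" "0 < \<rho>1" "\<rho>1 < \<rho>2"
    and inner: "\<And>\<zeta>. cmod \<zeta> = \<rho>1 \<Longrightarrow> u \<zeta> \<le> A"
    and outer: "\<And>\<zeta>. cmod \<zeta> = \<rho>2 \<Longrightarrow> u \<zeta> \<le> B"
    and "\<rho>1 \<le> cmod \<zeta>" "cmod \<zeta> \<le> \<rho>2"
  shows "u \<zeta> \<le> (A * ln (\<rho>2 / cmod \<zeta>) + B * ln (cmod \<zeta> / \<rho>1)) / ln (\<rho>2 / \<rho>1)"
proof -
  define L where "L = ln \<rho>2 - ln \<rho>1"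
  have "0 < L" using assms(2,3) by (simp add: L_def)
  define \<alpha> where "\<alpha> = (B - A) / L"
  define m where "m = A - \<alpha> * ln \<rho>1"
  have "B - \<alpha> * ln \<rho>2 = m"
    using \<open>0 < L\<close> by (simp add: m_def \<alpha>_def L_def field_simps)
  then have boundary: "u z - \<alpha> * ln (cmod z) \<le> m" if "cmod z = \<rho>1 \<or> cmod z = \<rho>2" for z
    using that inner[of z] outer[of z] unfolding m_def by (elim disjE) simp_all
  have "u \<zeta> - \<alpha> * ln (cmod \<zeta>) \<le> m"
  proof (rule field_le_epsilon)
    fix e :: real assume "0 < e"
    define \<epsilon> where "\<epsilon> = e / \<rho>2\<^sup>2"
    have "0 < \<epsilon>" using \<open>0 < e\<close> assms(2,3) by (simp add: \<epsilon>_def)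
    then obtain z0 where z0: "cmod z0 = \<rho>1 \<or> cmod z0 = \<rho>2"
      and max: "\<And>z. \<rho>1 \<le> cmod z \<and> cmod z \<le> \<rho>2 \<Longrightarrow>
         u z - \<alpha> * ln (cmod z) + \<epsilon> * (cmod z)\<^sup>2 \<le> u z0 - \<alpha> * ln (cmod z0) + \<epsilon> * (cmod z0)\<^sup>2"
      using perturbed_subharmonic_max_on_boundary[OF assms(1-3)] by blast
    have "\<epsilon> * (cmod z0)\<^sup>2 \<le> \<epsilon> * \<rho>2\<^sup>2"
      using z0 assms(2,3) \<open>0 < \<epsilon>\<close> by (auto intro!: mult_left_mono power_mono)
    moreover have "0 \<le> \<epsilon> * (cmod \<zeta>)\<^sup>2"
      using \<open>0 < \<epsilon>\<close> by simp
    ultimately have "u \<zeta> - \<alpha> * ln (cmod \<zeta>) \<le> m + \<epsilon> * \<rho>2\<^sup>2"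
      using max[of \<zeta>] boundary[OF z0] assms(6,7) by linarith
    then show "u \<zeta> - \<alpha> * ln (cmod \<zeta>) \<le> m + e"
      using assms(2,3) by (simp add: \<epsilon>_def)
  qed
  then have "u \<zeta> \<le> m + \<alpha> * ln (cmod \<zeta>)"
    by simp
  also have "\<dots> = (A * L + (B - A) * (ln (cmod \<zeta>) - ln \<rho>1)) / L"
    using \<open>0 < L\<close> by (simp add: m_def \<alpha>_def field_simps)
  also have "\<dots> = (A * (ln \<rho>2 - ln (cmod \<zeta>)) + B * (ln (cmod \<zeta>) - ln \<rho>1)) / L"
    by (simp add: L_def algebra_simps)
  also have "\<dots> = (A * ln (\<rho>2 / cmod \<zeta>) + B * ln (cmod \<zeta> / \<rho>1)) / ln (\<rho>2 / \<rho>1)"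
    using assms(2,3,6) by (subst (1 2 3) ln_div) (auto simp: L_def)
  finally show ?thesis .
qed

section \<open>Plurisubharmonic functions on concentric balls\<close>

lemma norm_vector_scalar_mult:
  fixes v :: "'a::real_normed_div_algebra ^ 'n"
  shows "norm (c *s v) = norm c * norm v"
  unfolding norm_vec_def by (simp add: L2_set_right_distrib norm_mult)

lemma psh_bdd_above_ball:
  assumes "psh f"
  shows "bdd_above (f ` ball x \<rho>)"
  using assms by (intro upper_semicont_bdd_above) (auto simp: psh_def)

lemma psh_imp_subharmonic_line:
  fixes f :: "complex ^ 'n \<Rightarrow> real"
  assumes "psh f"
  shows "subharmonic (\<lambda>\<zeta>. f (x + \<zeta> *s w))"
  unfolding subharmonic_def
proof (intro conjI allI)
  show "upper_semicont (\<lambda>\<zeta>. f (x + \<zeta> *s w))"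
    unfolding upper_semicont_iff_usc_at
  proof
    fix z
    have "continuous (at z) (\<lambda>\<zeta>. x + \<zeta> *s w)"
      unfolding continuous_def vector_scalar_mult_def by (intro tendsto_intros) simp_all
    moreover have "usc_at f (x + z *s w)"
      using assms by (simp add: psh_def upper_semicont_iff_usc_at)
    ultimately show "usc_at (\<lambda>\<zeta>. f (x + \<zeta> *s w)) z"
      by (rule usc_at_compose[rotated])
  qed
next
  fix a b :: complex
  have line: "x + (a + exp (\<i> * of_real \<theta>) * b) *s w = (x + a *s w) + exp (\<i> * of_real \<theta>) *s (b *s w)" for \<theta>
    by (simp add: add.assoc)
  show "(\<lambda>\<theta>. f (x + (a + exp (\<i> * of_real \<theta>) * b) *s w)) integrable_on {0..2*pi}"
    and "f (x + a *s w) \<le> 1 / (2*pi) * integral {0..2*pi} (\<lambda>\<theta>. f (x + (a + exp (\<i> * of_real \<theta>) * b) *s w))"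
    using assms unfolding psh_def line by blast+
qed

lemma psh_three_spheres:
  fixes f :: "complex ^ 'n \<Rightarrow> real"
  assumes "psh f" "0 < \<rho>1" "\<rho>1 < \<rho>2"
    and inner: "\<And>y. y \<in> sphere x \<rho>1 \<Longrightarrow> f y \<le> A"
    and outer: "\<And>y. y \<in> sphere x \<rho>2 \<Longrightarrow> f y \<le> B"
    and "\<rho>1 \<le> dist x y" "dist x y \<le> \<rho>2"
  shows "f y \<le> (A * ln (\<rho>2 / dist x y) + B * ln (dist x y / \<rho>1)) / ln (\<rho>2 / \<rho>1)"
proof -
  define d where "d = dist x y"
  have "0 < d" using assms(2,6) unfolding d_def by linarith
  define w where "w = of_real (1 / d) *s (y - x)"
  have "norm w = 1"
    using \<open>0 < d\<close> unfolding w_def norm_vector_scalar_mult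
    by (simp add: d_def dist_norm norm_minus_commute norm_divide)
  then have dist_line: "dist x (x + \<zeta> *s w) = cmod \<zeta>" for \<zeta>
    by (simp add: dist_norm norm_vector_scalar_mult)
  have "y = x + of_real d *s w"
    using \<open>0 < d\<close> by (simp add: w_def vector_smult_assoc)
  moreover have "(\<lambda>\<zeta>. f (x + \<zeta> *s w)) (of_real d)
      \<le> (A * ln (\<rho>2 / cmod (of_real d)) + B * ln (cmod (of_real d) / \<rho>1)) / ln (\<rho>2 / \<rho>1)"
    by (rule subharmonic_three_circles[OF psh_imp_subharmonic_line[OF \<open>psh f\<close>] assms(2,3)])
      (use inner outer dist_line assms(6,7) in \<open>auto simp: d_def\<close>)
  ultimately show ?thesis
    using \<open>0 < d\<close> by (simp add: d_def)
qed

lemma psh_le_Sup_ball: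
  assumes "psh f" "y \<in> ball x t"
  shows "f y \<le> Sup (f ` ball x t)"
  using assms by (intro cSUP_upper psh_bdd_above_ball)

lemma psh_point_le_inner_bound:
  fixes f :: "complex ^ 'n \<Rightarrow> real"
  assumes "psh f" "0 < t" "t \<le> R"
    and outer: "\<And>y. y \<in> sphere x R \<Longrightarrow> f y \<le> 0"
    and inner: "\<And>y. y \<in> ball x t \<Longrightarrow> f y \<le> A" and "A \<le> 0"
    and "dist x p \<le> R / 2"
  shows "f p * ln (2 * R / t) \<le> A * ln 2"
proof -
  have "0 < ln (2::real)" "ln 2 \<le> ln (2 * R / t)"
    using assms(2,3) by (simp_all add: le_divide_eq)
  then have "0 < ln (2 * R / t)"
    by linarith
  show ?thesis
  proof (cases "dist x p < t")
    case True
    then have "f p \<le> A" by (simp add: inner)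
    then have "f p * ln (2 * R / t) \<le> f p * ln 2"
      using \<open>ln 2 \<le> ln (2 * R / t)\<close> \<open>A \<le> 0\<close> by (intro mult_left_mono_neg) auto
    also have "\<dots> \<le> A * ln 2"
      using \<open>f p \<le> A\<close> \<open>0 < ln 2\<close> by simp
    finally show ?thesis .
  next
    case False
    then have "0 < dist x p" using \<open>0 < t\<close> by linarith
    \<comment> \<open>Inner sphere of radius t/2, which lies in ball x t.\<close>
    have "f p \<le> (A * ln (R / dist x p) + 0 * ln (dist x p / (t / 2))) / ln (R / (t / 2))"
      by (rule psh_three_spheres[OF \<open>psh f\<close>]) (use assms False in auto)
    moreover have "ln (R / (t / 2)) = ln (2 * R / t)"
      by (simp add: mult.commute)
    ultimately have "f p * ln (2 * R / t) \<le> A * ln (R / dist x p)"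
      using \<open>0 < ln (2 * R / t)\<close> by (simp only: pos_le_divide_eq mult_zero_left add_0_right)
    also have "\<dots> \<le> A * ln 2"
    proof (rule mult_left_mono_neg[OF _ \<open>A \<le> 0\<close>])
      have "2 \<le> R / dist x p"
        using \<open>0 < dist x p\<close> assms(7) by (simp add: le_divide_eq)
      then show "ln 2 \<le> ln (R / dist x p)"
        by simp
    qed
    finally show ?thesis .
  qed
qed

lemma psh_sup_ball_lower_bound:
  fixes f :: "complex ^ 'n \<Rightarrow> real"
  assumes "psh f" "0 < t" "t \<le> R"
    and nonpos: "\<And>y. y \<in> cball x R \<Longrightarrow> f y \<le> 0"
    and "dist x p \<le> R / 2"
  shows "f p * ln (2 * R / t) \<le> ln 2 * Sup (f ` ball x t)"
proof -
  have "Sup (f ` ball x t) \<le> 0"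
    using \<open>0 < t\<close> \<open>t \<le> R\<close> by (intro cSUP_least nonpos) auto
  then show ?thesis
    using psh_le_Sup_ball[OF \<open>psh f\<close>] nonpos assms(5)
    by (subst mult.commute, intro psh_point_le_inner_bound[OF assms(1-3)]) auto
qed

lemma psh_le_on_scaled_ball:
  fixes f :: "complex ^ 'n \<Rightarrow> real"
  assumes "psh f" "0 < t" "t < R" "1 \<le> s" "s * t \<le> R"
    and outer: "\<And>y. y \<in> sphere x R \<Longrightarrow> f y \<le> 0"
    and inner: "\<And>y. y \<in> ball x t \<Longrightarrow> f y \<le> A" and "A \<le> 0"
    and "y \<in> ball x (s * t)"
  shows "f y \<le> (1 - ln s / ln (R / t)) * A"
proof -
  define \<kappa> where "\<kappa> = 1 - ln s / ln (R / t)"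
  have "0 < ln (R / t)" "0 \<le> ln s"
    using assms(2-4) by simp_all
  show ?thesis
    unfolding \<kappa>_def[symmetric]
  proof (cases "dist x y < t")
    case True
    then have "f y \<le> A" by (simp add: inner)
    also have "A \<le> \<kappa> * A"
      using \<open>A \<le> 0\<close> \<open>0 < ln (R / t)\<close> \<open>0 \<le> ln s\<close> by (simp add: \<kappa>_def mult_le_cancel_right1)
    finally show "f y \<le> \<kappa> * A" .
  next
    case False
    define d where "d = dist x y"
    \<comment> \<open>The sphere of radius t' lies in ball x t, and d / t' = s.\<close>
    define t' where "t' = d / s"
    have "0 < t'" "t' < t" "d = s * t'" "d \<le> R"
      using False assms(2,4,5,9) by (auto simp: t'_def d_def field_simps)
    have "d * 1 \<le> d * s"
      using \<open>0 < t\<close> False assms(4) by (intro mult_left_mono) (auto simp: d_def)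
    then have "t' \<le> d"
      using assms(4) by (simp add: t'_def pos_divide_le_eq)
    have "f y \<le> (A * ln (R / d) + 0 * ln (d / t')) / ln (R / t')"
      unfolding d_def
      by (rule psh_three_spheres[OF \<open>psh f\<close>])
        (use \<open>0 < t'\<close> \<open>t' < t\<close> \<open>t' \<le> d\<close> \<open>d \<le> R\<close> assms(3) inner outer in \<open>auto simp: d_def\<close>)
    also have "\<dots> = (1 - ln s / ln (R / t')) * A"
      using \<open>0 < t'\<close> \<open>t' < t\<close> assms(2-4) \<open>d = s * t'\<close> by (simp add: ln_div ln_mult field_simps)
    also have "\<dots> \<le> \<kappa> * A"
    proof (rule mult_right_mono_neg[OF _ \<open>A \<le> 0\<close>])
      have "ln (R / t) \<le> ln (R / t')"
        using \<open>0 < t'\<close> \<open>t' < t\<close> assms(2,3) by (simp add: divide_left_mono)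
      then show "\<kappa> \<le> 1 - ln s / ln (R / t')"
        unfolding \<kappa>_def using \<open>0 < ln (R / t)\<close> \<open>0 \<le> ln s\<close> by (simp add: divide_left_mono)
    qed
    finally show "f y \<le> \<kappa> * A" .
  qed
qed

lemma psh_sup_ball_growth:
  fixes f :: "complex ^ 'n \<Rightarrow> real"
  assumes "psh f" "0 < t" "t < R" "1 \<le> s" "s * t \<le> R"
    and nonpos: "\<And>y. y \<in> cball x R \<Longrightarrow> f y \<le> 0"
  shows "Sup (f ` ball x (s * t)) \<le> (1 - ln s / ln (R / t)) * Sup (f ` ball x t)"
proof (rule cSUP_least)
  have "t \<le> s * t"
    using assms(2,4) by simp
  then show "ball x (s * t) \<noteq> {}"
    using assms(2) by (simp add: not_le)
next
  fix y assume "y \<in> ball x (s * t)"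
  moreover have "Sup (f ` ball x t) \<le> 0"
    using \<open>0 < t\<close> \<open>t < R\<close> by (intro cSUP_least nonpos) auto
  ultimately show "f y \<le> (1 - ln s / ln (R / t)) * Sup (f ` ball x t)"
    using psh_le_Sup_ball[OF \<open>psh f\<close>] nonpos
    by (intro psh_le_on_scaled_ball[OF assms(1-5)]) auto
qed

lemma psh_sup_ball_log_growth:
  fixes f :: "complex ^ 'n \<Rightarrow> real"
  assumes "psh f" "0 < t" "t < R" "1 \<le> s" "s * t \<le> R"
    and nonpos: "\<And>y. y \<in> cball x R \<Longrightarrow> f y \<le> 0"
    and "dist x p \<le> R / 2" "- K \<le> f p"
    and "0 < m" "m \<le> ln (R / t)"
  shows "Sup (f ` ball x (s * t)) \<le> K * (1 / m + 1 / ln 2) * ln s + Sup (f ` ball x t)"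
proof -
  define A where "A = Sup (f ` ball x t)"
  define L where "L = ln (R / t)"
  have "0 < L" using assms(9,10) by (simp add: L_def)
  have "0 \<le> K"
    using assms(2,3,7,8) nonpos[of p] by simp
  have "ln (2 * R / t) = ln 2 + L"
    using ln_mult[of 2 "R / t"] assms(2,3) by (simp add: L_def)
  then have "f p * (ln 2 + L) \<le> ln 2 * A"
    using psh_sup_ball_lower_bound[OF assms(1,2) _ nonpos assms(7)] assms(3) by (simp add: A_def)
  moreover have "- K * (ln 2 + L) \<le> f p * (ln 2 + L)"
    using assms(8) \<open>0 < L\<close> by (intro mult_right_mono) auto
  ultimately have "- A / L \<le> K * (1 / L + 1 / ln 2)"
    using \<open>0 < L\<close> by (simp add: field_simps)
  also have "\<dots> \<le> K * (1 / m + 1 / ln 2)"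
    using \<open>0 \<le> K\<close> assms(9,10) by (intro mult_left_mono) (simp_all add: L_def divide_left_mono)
  finally have "- A / L * ln s \<le> K * (1 / m + 1 / ln 2) * ln s"
    using assms(4) by (intro mult_right_mono) auto
  moreover have "Sup (f ` ball x (s * t)) \<le> (1 - ln s / L) * A"
    using psh_sup_ball_growth[OF assms(1-5) nonpos] by (simp add: A_def L_def)
  ultimately show ?thesis
    by (simp add: A_def algebra_simps)
qed

lemma psh_chain_step:
  fixes f :: "complex ^ 'n \<Rightarrow> real"
  assumes "psh f" "0 < \<delta>" and nonpos: "\<And>y. y \<in> cball x (4 * \<delta>) \<Longrightarrow> f y \<le> 0"
    and "dist x p \<le> 2 * \<delta>" "- K \<le> f p" "0 < K"
  shows "\<exists>q\<in>ball x \<delta>. - (4 * K) \<le> f q"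
proof -
  have "f p * ln (2 * (4 * \<delta>) / \<delta>) \<le> ln 2 * Sup (f ` ball x \<delta>)"
    using assms(2,4) by (intro psh_sup_ball_lower_bound[OF assms(1,2) _ nonpos]) auto
  then have "f p * ln 8 \<le> ln 2 * Sup (f ` ball x \<delta>)"
    using assms(2) by simp
  moreover have "ln (8::real) = 3 * ln 2"
    using ln_realpow[of 2 3] by simp
  ultimately have "3 * f p \<le> Sup (f ` ball x \<delta>)"
    by simp
  then have "- (4 * K) < Sup (f ` ball x \<delta>)"
    using assms(5,6) by linarith
  then show ?thesis
    using less_cSUP_iff[OF _ psh_bdd_above_ball[OF \<open>psh f\<close>]] assms(2) by (auto intro: less_imp_le)
qed

lemma psh_chain_along_points:
  fixes f :: "complex ^ 'n \<Rightarrow> real" and pt :: "nat \<Rightarrow> complex ^ 'n"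
  assumes "psh f" "0 < \<delta>" "0 < K"
    and step: "\<And>k. k < N \<Longrightarrow> dist (pt k) (pt (Suc k)) \<le> \<delta>"
    and nonpos: "\<And>k y. k \<le> N \<Longrightarrow> y \<in> cball (pt k) (4 * \<delta>) \<Longrightarrow> f y \<le> 0"
    and "- K \<le> f (pt 0)"
  shows "\<exists>p\<in>ball (pt N) \<delta>. - (K * 4 ^ N) \<le> f p"
proof -
  have "\<exists>p\<in>ball (pt k) \<delta>. - (K * 4 ^ k) \<le> f p" if "k \<le> N" for k
    using that
  proof (induction k)
    case 0
    then show ?case
      using assms(2,6) by (intro bexI[of _ "pt 0"]) simp_all
  next
    case (Suc k)
    then obtain p where "p \<in> ball (pt k) \<delta>" "- (K * 4 ^ k) \<le> f p"
      by auto
    moreover have "dist (pt (Suc k)) p \<le> 2 * \<delta>"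
      using dist_triangle[of "pt (Suc k)" p "pt k"] step[of k] Suc.prems \<open>p \<in> ball (pt k) \<delta>\<close>
      by (simp add: dist_commute)
    moreover have "0 < K * 4 ^ k"
      using \<open>0 < K\<close> by simp
    ultimately obtain q where "q \<in> ball (pt (Suc k)) \<delta>" "- (4 * (K * 4 ^ k)) \<le> f q"
      using psh_chain_step[OF assms(1,2) nonpos[OF Suc.prems]] by blast
    then show ?case
      by (auto simp: algebra_simps)
  qed
  then show ?thesis
    by simp
qed

lemma psh_chain_lower_bound:
  fixes f :: "complex ^ 'n \<Rightarrow> real"
  assumes "psh f" "0 < \<delta>" and nonpos: "\<And>y. norm y < 1 + 4 * \<delta> \<Longrightarrow> f y \<le> 0"
    and "z \<in> ball 0 1" "- K \<le> f z" "0 < K"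
    and "2 \<le> real N * \<delta>" and "x \<in> ball 0 1"
  shows "\<exists>p\<in>ball x \<delta>. - (K * 4 ^ N) \<le> f p"
proof -
  define pt where "pt k = z + (real k / real N) *\<^sub>R (x - z)" for k
  have "0 < real N"
    using assms(7) by (cases N) auto
  have "dist (pt k) (pt (Suc k)) \<le> \<delta>" for k
  proof -
    have "pt (Suc k) - pt k = (1 / real N) *\<^sub>R (x - z)"
      by (simp add: pt_def add_divide_distrib scaleR_add_left)
    then have "dist (pt k) (pt (Suc k)) = norm (x - z) / real N"
      using \<open>0 < real N\<close> by (simp add: dist_norm norm_minus_commute[of "pt k"])
    also have "\<dots> \<le> 2 / real N"
      using assms(4,8) norm_triangle_ineq4[of x z] \<open>0 < real N\<close> by (simp add: divide_right_mono)
    also have "\<dots> \<le> \<delta>"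
      using assms(7) \<open>0 < real N\<close> by (simp add: divide_le_eq mult.commute)
    finally show ?thesis .
  qed
  moreover have "f y \<le> 0" if "k \<le> N" "y \<in> cball (pt k) (4 * \<delta>)" for k y
  proof -
    have "pt k = (1 - real k / real N) *\<^sub>R z + (real k / real N) *\<^sub>R x"
      by (simp add: pt_def algebra_simps)
    moreover have "real k / real N \<le> 1"
      using that(1) \<open>0 < real N\<close> by (simp add: divide_le_eq)
    ultimately have "pt k \<in> ball 0 1"
      using assms(4,8) by (simp only:) (rule convexD[OF convex_ball]; simp)
    then show ?thesis
      using that(2) norm_triangle_ineq[of "pt k" "y - pt k"]
      by (intro nonpos) (simp add: dist_norm norm_minus_commute)
  qed
  moreover have "pt 0 = z" "pt N = x"
    using \<open>0 < real N\<close> by (simp_all add: pt_def)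
  ultimately show ?thesis
    using psh_chain_along_points[OF assms(1,2,6), of N pt] assms(5) by auto
qed

section \<open>The class F_r\<close>

lemma F_class_nonpos:
  assumes "f \<in> F_class r" "norm y < r"
  shows "f y \<le> 0"
proof -
  have "f y \<le> Sup (f ` ball 0 r)"
    using assms by (intro psh_le_Sup_ball) (auto simp: F_class_def)
  then show ?thesis
    using assms(1) by (simp add: F_class_def)
qed

lemma F_class_exists_ge_minus_two:
  assumes "f \<in> F_class r"
  shows "\<exists>z\<in>ball 0 1. - 2 \<le> f z"
proof -
  have "- 2 < Sup (f ` ball 0 1)"
    using assms by (simp add: F_class_def)
  moreover have "bdd_above (f ` ball 0 1)"
    using assms by (intro psh_bdd_above_ball) (simp add: F_class_def)
  ultimately obtain z where "z \<in> ball 0 1" "- 2 < f z"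
    using less_cSUP_iff[of "ball 0 1" f] by auto
  then show ?thesis
    by (auto intro: less_imp_le)
qed

(* 2 * 4^N with N >= 8/(r-1) is the lower bound for -f obtained from a chain of N steps of
   length (r-1)/4; the bracket comes from log (R/t) >= log ((r+1)/2) in the growth estimate. *)
definition growth_const :: "real \<Rightarrow> real" where
  "growth_const r = 2 * 4 ^ nat \<lceil>8 / (r - 1)\<rceil> * (1 / ln ((r + 1) / 2) + 1 / ln 2)"

lemma F_class_lower_bound_near:
  fixes f :: "complex ^ 'n \<Rightarrow> real"
  assumes "f \<in> F_class r" "1 < r" "x \<in> ball 0 1"
  shows "\<exists>p\<in>ball x ((r - 1) / 4). - (2 * 4 ^ nat \<lceil>8 / (r - 1)\<rceil>) \<le> f p"
proof -
  define \<delta> where "\<delta> = (r - 1) / 4"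
  have "0 < \<delta>" "1 + 4 * \<delta> = r"
    using assms(2) by (simp_all add: \<delta>_def field_simps)
  have "2 \<le> real (nat \<lceil>2 / \<delta>\<rceil>) * \<delta>"
    using \<open>0 < \<delta>\<close> by (simp add: pos_divide_le_eq[symmetric])
  moreover have "2 / \<delta> = 8 / (r - 1)"
    by (simp add: \<delta>_def)
  moreover have "psh f"
    using assms(1) by (simp add: F_class_def)
  moreover have "f y \<le> 0" if "norm y < 1 + 4 * \<delta>" for y
    using F_class_nonpos[OF assms(1)] that unfolding \<open>1 + 4 * \<delta> = r\<close> .
  moreover obtain z where "z \<in> ball 0 1" "- 2 \<le> f z"
    using F_class_exists_ge_minus_two[OF assms(1)] by blast
  ultimately show ?thesis
    using psh_chain_lower_bound[of f \<delta> z 2 "nat \<lceil>8 / (r - 1)\<rceil>" x] \<open>0 < \<delta>\<close> assms(3)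
    by (simp add: \<delta>_def)
qed

lemma F_class_sup_ball_growth:
  fixes f :: "complex ^ 'n \<Rightarrow> real"
  assumes "f \<in> F_class r" "1 < r" "0 < t" "1 \<le> s" "norm x + s * t \<le> 1"
  shows "Sup (f ` ball x (s * t)) \<le> growth_const r * ln s + Sup (f ` ball x t)"
proof -
  define \<delta> where "\<delta> = (r - 1) / 4"
  have "0 < \<delta>" "1 + 2 * \<delta> = (r + 1) / 2" "1 + 4 * \<delta> = r"
    using assms(2) by (simp_all add: \<delta>_def field_simps)
  have "t \<le> s * t"
    using assms(3,4) by simp
  then have "t \<le> 1 - norm x" "s * t \<le> 1 - norm x"
    using assms(5) by linarith+
  then obtain p where "p \<in> ball x \<delta>" "- (2 * 4 ^ nat \<lceil>8 / (r - 1)\<rceil>) \<le> f p"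
    using F_class_lower_bound_near[OF assms(1,2), of x] assms(3) by (auto simp: \<delta>_def)
  define R where "R = 1 - norm x + 2 * \<delta>"
  show ?thesis
    unfolding growth_const_def
  proof (rule psh_sup_ball_log_growth[OF _ assms(3) _ assms(4)])
    show "psh f"
      using assms(1) by (simp add: F_class_def)
    show "t < R" "s * t \<le> R" "dist x p \<le> R / 2"
      using \<open>0 < \<delta>\<close> assms(3) \<open>t \<le> 1 - norm x\<close> \<open>s * t \<le> 1 - norm x\<close> \<open>p \<in> ball x \<delta>\<close>
      by (auto simp: R_def)
    show "f y \<le> 0" if "y \<in> cball x R" for y
      using that norm_triangle_ineq[of x "y - x"] \<open>0 < \<delta>\<close> \<open>1 + 4 * \<delta> = r\<close>
      by (intro F_class_nonpos[OF assms(1)]) (simp add: R_def dist_norm norm_minus_commute)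
    have "t \<le> 1"
      using \<open>t \<le> 1 - norm x\<close> norm_ge_zero[of x] by linarith
    then have "\<delta> * t \<le> \<delta>"
      using \<open>0 < \<delta>\<close> by simp
    then have "(r + 1) / 2 \<le> R / t"
      using assms(3) \<open>t \<le> 1 - norm x\<close> unfolding \<open>1 + 2 * \<delta> = (r + 1) / 2\<close>[symmetric]
      by (simp add: R_def le_divide_eq algebra_simps)
    then show "ln ((r + 1) / 2) \<le> ln (R / t)"
      using assms(2) by (intro ln_mono) auto
    show "0 < ln ((r + 1) / 2)"
      using assms(2) by simp
  qed fact
qed

theorem proposition2p5:
  fixes r :: real
  assumes "r > 1"
  shows "\<exists>c::real. \<forall>a::real. a > 1 \<longrightarrow>
           (\<forall>(f :: complex ^ 'n \<Rightarrow> real) \<in> F_class r. \<forall>s \<in> {1..a}. \<forall>x t.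
              t > 0 \<and> ball x t \<subseteq> ball x (a * t) \<and> ball x (a * t) \<subseteq> ball 0 1 \<longrightarrow>
              Sup (f ` ball x (s * t)) \<le> c * ln s + Sup (f ` ball x t))"
proof (intro exI[of _ "growth_const r"] allI impI ballI)
  fix a s t and f :: "complex ^ 'n \<Rightarrow> real" and x :: "complex ^ 'n"
  assume "1 < a" "f \<in> F_class r" "s \<in> {1..a}"
    and balls: "0 < t \<and> ball x t \<subseteq> ball x (a * t) \<and> ball x (a * t) \<subseteq> ball 0 1"
  then have "0 < t" "1 \<le> s" "s \<le> a"
    by auto
  then have "0 < a * t" "s * t \<le> a * t"
    using \<open>1 < a\<close> by simp_all
  moreover have "dist x 0 + a * t \<le> 1 \<or> a * t \<le> 0"
    using balls ball_subset_ball_iff[of x "a * t" 0 1] by blast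
  ultimately have "norm x + s * t \<le> 1"
    by (metis dist_commute dist_0_norm add_left_mono not_le order_trans)
  then show "Sup (f ` ball x (s * t)) \<le> growth_const r * ln s + Sup (f ` ball x t)"
    using F_class_sup_ball_growth[OF \<open>f \<in> F_class r\<close> assms \<open>0 < t\<close> \<open>1 \<le> s\<close>] by blast
qed

end
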